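(* Let $0<a<b$ and, for $i=1,2$, let $f_i=(f_{i,1},\dots,f_{i,m_i})^T$ be a vector of linearly independent continuously differentiable functions on $[a,b]$. For $i=1,2$ fix design points $a=t_{i,1}<t_{i,2}<\dots<t_{i,n_i}=b$, and set $$M_i=\int_a^b\dot f_i(t)\dot f_i^T(t)\,dt,\qquad C_i=M_i+\frac{f_i(a)f_i^T(a)}{a},$$ $$B_i=\sum_{j=2}^{n_i}\frac{[f_i(t_{i,j})-f_i(t_{i,j-1})][f_i(t_{i,j})-f_i(t_{i,j-1})]^T}{t_{i,j}-t_{i,j-1}}.$$ Assume $C_i$ and $B_i$ are non-singular for $i=1,2$. For weight vectors $\omega=(\omega_{i,j})_{i=1,2;\,j=2,\dots,n_i}$ with $\omega_{i,j}\in\mathbb{R}^{m_i}$ satisfying the unbiasedness constraints $$M_i=\sum_{j=2}^{n_i}\omega_{i,j}\big(f_i(t_{i,j})-f_i(t_{i,j-1})\big)^T,\qquad i=1,2,$$ define for $t\in[a,b]$ $$g_n(t,\omega)=\sum_{i=1}^2 f_i^T(t)\Big\{-C_i^{-1}M_iC_i^{-1}+\sum_{j=2}^{n_i}(t_{i,j}-t_{i,j-1})\,C_i^{-1}\omega_{i,j}\omega_{i,j}^TC_i^{-1}+C_i^{-1}\Big\}f_i(t),$$ and $\mu_{p,n}(\omega)=\big(\int_a^b g_n(t,\omega)^p\,dt\big)^{1/p}$ for $p\in[1,\infty)$, $\mu_{\infty,n}(\omega)=\sup_{t\in[a,b]}g_n(t,\omega)$. Then the weights $$\omega_{i,j}^*=M_iB_i^{-1}\frac{f_i(t_{i,j})-f_i(t_{i,j-1})}{t_{i,j}-t_{i,j-1}},\qquad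 j=2,\dots,n_i,\ i=1,2,$$ satisfy the unbiasedness constraints, and for every $p\in[1,\infty]$ they minimise $\mu_{p,n}(\omega)$ over all weight vectors satisfying the unbiasedness constraints. Equivalently, in terms of $\gamma_{i,j}=\omega_{i,j}\sqrt{t_{i,j}-t_{i,j-1}}$, the minimiser is $\gamma^*_{i,j}=M_iB_i^{-1}\frac{f_i(t_{i,j})-f_i(t_{i,j-1})}{\sqrt{t_{i,j}-t_{i,j-1}}}$.
   Context: Interpretation: in the models $Y_i(t_{i,j})=f_i^T(t_{i,j})\theta_i+\varepsilon_i(t_{i,j})$ with independent Brownian motion errors $\varepsilon_1,\varepsilon_2$, the estimators $\hat\theta_{i,n_i}=C_i^{-1}\{\sum_{j=2}^{n_i}\omega_{i,j}(Y_i(t_{i,j})-Y_i(t_{i,j-1}))+\frac{f_i(a)}{a}Y_i(a)\}$ are unbiased exactly under the stated constraints, and then $g_n(t,\omega)=\mathrm{Var}(f_1^T(t)\hat\theta_{1,n_1}-f_2^T(t)\hat\theta_{2,n_2})$; the claim is the purely matrix-analytic minimisation statement above. *)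

theory Defs
  imports "HOL-Analysis.Analysis"
begin

definition outer :: "real^'m \<Rightarrow> real^'m \<Rightarrow> real^'m^'m" where
  "outer x y = (\<chi> r c. x $ r * y $ c)"

definition lin_indep_on :: "real set \<Rightarrow> (real \<Rightarrow> real^'m) \<Rightarrow> bool" where
  "lin_indep_on S f \<longleftrightarrow> (\<forall>c::real^'m. (\<forall>s\<in>S. c \<bullet> f s = 0) \<longrightarrow> c = 0)"

definition Mmat :: "real \<Rightarrow> real \<Rightarrow> (real \<Rightarrow> real^'m) \<Rightarrow> real^'m^'m" where
  "Mmat a b f' = (\<chi> r c. integral {a..b} (\<lambda>s. f' s $ r * f' s $ c))"

definition Cmat :: "real \<Rightarrow> real \<Rightarrow> (real \<Rightarrow> real^'m) \<Rightarrow> (real \<Rightarrow> real^'m) \<Rightarrow> real^'m^'m" where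
  "Cmat a b f f' = Mmat a b f' + (1 / a) *\<^sub>R outer (f a) (f a)"

definition Bmat :: "(real \<Rightarrow> real^'m) \<Rightarrow> (nat \<Rightarrow> real) \<Rightarrow> nat \<Rightarrow> real^'m^'m" where
  "Bmat f t n = (\<Sum>j\<in>{2..n}. (1 / (t j - t (j - 1))) *\<^sub>R
      outer (f (t j) - f (t (j - 1))) (f (t j) - f (t (j - 1))))"

definition unbiased :: "real \<Rightarrow> real \<Rightarrow> (real \<Rightarrow> real^'m) \<Rightarrow> (real \<Rightarrow> real^'m)
    \<Rightarrow> (nat \<Rightarrow> real) \<Rightarrow> nat \<Rightarrow> (nat \<Rightarrow> real^'m) \<Rightarrow> bool" where
  "unbiased a b f f' t n w \<longleftrightarrow>
     Mmat a b f' = (\<Sum>j\<in>{2..n}. outer (w j) (f (t j) - f (t (j - 1))))"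

definition Kmat :: "real \<Rightarrow> real \<Rightarrow> (real \<Rightarrow> real^'m) \<Rightarrow> (real \<Rightarrow> real^'m)
    \<Rightarrow> (nat \<Rightarrow> real) \<Rightarrow> nat \<Rightarrow> (nat \<Rightarrow> real^'m) \<Rightarrow> real^'m^'m" where
  "Kmat a b f f' t n w =
     (let Ci = matrix_inv (Cmat a b f f') in
       - (Ci ** Mmat a b f' ** Ci)
       + (\<Sum>j\<in>{2..n}. (t j - t (j - 1)) *\<^sub>R (Ci ** outer (w j) (w j) ** Ci))
       + Ci)"

definition gpart :: "real \<Rightarrow> real \<Rightarrow> (real \<Rightarrow> real^'m) \<Rightarrow> (real \<Rightarrow> real^'m)
    \<Rightarrow> (nat \<Rightarrow> real) \<Rightarrow> nat \<Rightarrow> (nat \<Rightarrow> real^'m) \<Rightarrow> real \<Rightarrow> real" where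
  "gpart a b f f' t n w s = f s \<bullet> (Kmat a b f f' t n w *v f s)"

definition wopt :: "real \<Rightarrow> real \<Rightarrow> (real \<Rightarrow> real^'m) \<Rightarrow> (real \<Rightarrow> real^'m)
    \<Rightarrow> (nat \<Rightarrow> real) \<Rightarrow> nat \<Rightarrow> nat \<Rightarrow> real^'m" where
  "wopt a b f f' t n j = (Mmat a b f' ** matrix_inv (Bmat f t n)) *v
      ((1 / (t j - t (j - 1))) *\<^sub>R (f (t j) - f (t (j - 1))))"

definition mu_p :: "real \<Rightarrow> real \<Rightarrow> real \<Rightarrow> (real \<Rightarrow> real) \<Rightarrow> real" where
  "mu_p a b p g = (integral {a..b} (\<lambda>s. g s powr p)) powr (1 / p)"

definition mu_inf :: "real \<Rightarrow> real \<Rightarrow> (real \<Rightarrow> real) \<Rightarrow> real" where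
  "mu_inf a b g = (SUP s\<in>{a..b}. g s)"

definition design :: "real \<Rightarrow> real \<Rightarrow> (nat \<Rightarrow> real) \<Rightarrow> nat \<Rightarrow> bool" where
  "design a b t n \<longleftrightarrow> 2 \<le> n \<and> t 1 = a \<and> t n = b \<and> (\<forall>j\<in>{2..n}. t (j - 1) < t j)"

definition C1_with :: "real \<Rightarrow> real \<Rightarrow> (real \<Rightarrow> real^'m) \<Rightarrow> (real \<Rightarrow> real^'m) \<Rightarrow> bool" where
  "C1_with a b f f' \<longleftrightarrow> (\<forall>s\<in>{a..b}. (f has_vector_derivative f' s) (at s within {a..b}))
      \<and> continuous_on {a..b} f'"

end

theory Submission
  imports Defs
begin

text \<open>
  Write d_j = f(t_j) - f(t_{j-1}), D_j = t_j - t_{j-1} and u = C^{-1} f(s).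
  Since C = M + f(a) f(a)^T / a, the matrix in braces equals
  C^{-1} (\<Sum>_j D_j w_j w_j^T + f(a) f(a)^T / a) C^{-1}, so each summand of g_n(s, w) is
  \<Sum>_j D_j (w_j \<bullet> u)^2 + (f(a) \<bullet> u)^2 / a, and only the first term depends on w.
  With v = (M B^{-1})^T u one has D_j (w*_j \<bullet> u) = d_j \<bullet> v, while for every unbiased w
  the cross sum \<Sum>_j (d_j \<bullet> v) (w_j \<bullet> u) equals u \<bullet> M v, independently of w.
  Hence w - w* is orthogonal to w* for the D-weighted inner product, and Pythagoras shows
  that w* minimises g_n(s, w) for every s simultaneously. Pointwise domination of the
  continuous non-negative functions g_n(., w) then gives the inequality for every \<mu>_p
  and for \<mu>_\<infinity>.
\<close>

lemma inner_matrix_vector_mult_transpose: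
  "(x::real^'m) \<bullet> ((A::real^'n^'m) *v y) = (transpose A *v x) \<bullet> y"
  by (simp add: dot_lmul_matrix)

lemma outer_matrix_vector_mult: "outer x y *v (z::real^'n) = (y \<bullet> z) *\<^sub>R x"
  unfolding outer_def matrix_vector_mult_def inner_vec_def
  by (simp add: vec_eq_iff sum_distrib_left mult_ac)

lemma matrix_mult_outer: "(P::real^'n^'n) ** outer x y = outer (P *v x) y"
  unfolding outer_def matrix_vector_mult_def matrix_matrix_mult_def
  by (simp add: vec_eq_iff sum_distrib_left mult_ac)

lemma outer_scaleR_left: "outer (c *\<^sub>R x) (y::real^'n) = c *\<^sub>R outer x y"
  unfolding outer_def by (simp add: vec_eq_iff)

lemma matrix_vector_mult_sum_rdistrib:
  "(\<Sum>j\<in>S. A j) *v (x::real^'n) = (\<Sum>j\<in>S. A j *v x)"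
  by (induction S rule: infinite_finite_induct) (auto simp: matrix_vector_mult_add_rdistrib)

lemma matrix_add_rdistrib: "((A::'a::semiring_1^'n^'m) + B) ** C = A ** C + B ** C"
  by (vector matrix_matrix_mult_def sum.distrib distrib_right)

lemma matrix_sum_ldistrib: "(P::'a::semiring_1^'n^'m) ** (\<Sum>j\<in>S. X j) = (\<Sum>j\<in>S. P ** X j)"
  by (induction S rule: infinite_finite_induct) (auto simp: matrix_add_ldistrib)

lemma matrix_sum_rdistrib: "(\<Sum>j\<in>S. X j) ** (P::'a::semiring_1^'n^'m) = (\<Sum>j\<in>S. X j ** P)"
  by (induction S rule: infinite_finite_induct) (auto simp: matrix_add_rdistrib)

lemma matrix_mult_scaleR_right: "(A::real^'n^'m) ** (c *\<^sub>R B) = c *\<^sub>R (A ** B)"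
  by (simp add: matrix_scalar_ac scalar_matrix_assoc)

lemma matrix_inv_right:
  fixes C :: "'a::semiring_1^'n^'m"
  assumes "invertible C"
  shows "C ** matrix_inv C = mat 1"
  unfolding matrix_inv_def using someI_ex[OF assms[unfolded invertible_def]] by blast

lemma matrix_inv_left:
  fixes C :: "'a::semiring_1^'n^'m"
  assumes "invertible C"
  shows "matrix_inv C ** C = mat 1"
  unfolding matrix_inv_def using someI_ex[OF assms[unfolded invertible_def]] by blast

lemma transpose_matrix_inv_symmetric:
  fixes C :: "real^'n^'n"
  assumes "invertible C" "transpose C = C"
  shows "transpose (matrix_inv C) = matrix_inv C"
proof -
  have "transpose (matrix_inv C) ** C = mat 1"
    using matrix_inv_right[OF assms(1)] assms(2) by (metis matrix_transpose_mul transpose_mat)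
  then have "transpose (matrix_inv C) = (transpose (matrix_inv C) ** C) ** matrix_inv C"
    using matrix_inv_right[OF assms(1)] by (metis matrix_mul_assoc matrix_mul_rid)
  also have "\<dots> = matrix_inv C"
    using \<open>transpose (matrix_inv C) ** C = mat 1\<close> by (simp add: matrix_mul_lid)
  finally show ?thesis .
qed

lemma inner_symmetric_sandwich:
  fixes P Y :: "real^'n^'n"
  assumes "transpose P = P"
  shows "x \<bullet> ((P ** Y ** P) *v x) = (P *v x) \<bullet> (Y *v (P *v x))"
  by (metis assms inner_matrix_vector_mult_transpose matrix_vector_mul_assoc)

lemma transpose_Cmat: "transpose (Cmat a b f f') = Cmat a b f f'"
  unfolding Cmat_def Mmat_def outer_def transpose_def by (simp add: vec_eq_iff mult.commute)

definition weighted_square_sum :: "(nat \<Rightarrow> real) \<Rightarrow> nat \<Rightarrow> (nat \<Rightarrow> real^'m) \<Rightarrow> real^'m \<Rightarrow> real"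
  where "weighted_square_sum t n w u = (\<Sum>j\<in>{2..n}. (t j - t (j - 1)) * (w j \<bullet> u)\<^sup>2)"

lemma Kmat_eq_sandwich:
  fixes f f' :: "real \<Rightarrow> real^'n"
  assumes "invertible (Cmat a b f f')"
  defines "Ci \<equiv> matrix_inv (Cmat a b f f')"
  shows "Kmat a b f f' t n w = Ci ** ((\<Sum>j\<in>{2..n}. (t j - t (j - 1)) *\<^sub>R outer (w j) (w j))
                                     + (1 / a) *\<^sub>R outer (f a) (f a)) ** Ci"
proof -
  have "Ci = Ci ** Cmat a b f f' ** Ci"
    using matrix_inv_left[OF assms(1)] unfolding Ci_def by (simp add: matrix_mul_lid)
  also have "\<dots> = Ci ** Mmat a b f' ** Ci + (1 / a) *\<^sub>R (Ci ** outer (f a) (f a) ** Ci)"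
    unfolding Cmat_def by (simp add: matrix_add_ldistrib matrix_add_rdistrib
        matrix_mult_scaleR_right scalar_matrix_assoc[symmetric])
  finally have "- (Ci ** Mmat a b f' ** Ci) + Ci = (1 / a) *\<^sub>R (Ci ** outer (f a) (f a) ** Ci)"
    by (simp add: algebra_simps)
  then show ?thesis
    unfolding Kmat_def Let_def Ci_def[symmetric]
    by (simp add: matrix_add_ldistrib matrix_add_rdistrib matrix_sum_ldistrib matrix_sum_rdistrib
        matrix_mult_scaleR_right scalar_matrix_assoc[symmetric] add.assoc)
qed

lemma gpart_eq_weighted_square_sum:
  fixes f f' :: "real \<Rightarrow> real^'n" and s :: real
  assumes "invertible (Cmat a b f f')"
  defines "u \<equiv> matrix_inv (Cmat a b f f') *v f s"
  shows "gpart a b f f' t n w s = weighted_square_sum t n w u + (1 / a) * (f a \<bullet> u)\<^sup>2"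
proof -
  have Ci_symmetric: "transpose (matrix_inv (Cmat a b f f')) = matrix_inv (Cmat a b f f')"
    by (rule transpose_matrix_inv_symmetric[OF assms(1) transpose_Cmat])
  show ?thesis
    unfolding gpart_def Kmat_eq_sandwich[OF assms(1)] inner_symmetric_sandwich[OF Ci_symmetric]
      u_def[symmetric]
    by (simp add: weighted_square_sum_def matrix_vector_mult_add_rdistrib
        matrix_vector_mult_sum_rdistrib outer_matrix_vector_mult inner_sum_right inner_add_right
        scaleR_matrix_vector_assoc[symmetric] power2_eq_square inner_commute mult_ac)
qed

lemma unbiased_cross_sum:
  assumes "unbiased a b f f' t n w"
  shows "(\<Sum>j\<in>{2..n}. ((f (t j) - f (t (j - 1))) \<bullet> v) * (w j \<bullet> u)) = u \<bullet> (Mmat a b f' *v v)"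
  using assms unfolding unbiased_def
  by (simp add: matrix_vector_mult_sum_rdistrib outer_matrix_vector_mult inner_sum_right
      mult.commute) (simp add: inner_commute)

lemma wopt_unbiased:
  fixes f f' :: "real \<Rightarrow> real^'n"
  assumes "invertible (Bmat f t n)"
  shows "unbiased a b f f' t n (wopt a b f f' t n)"
proof -
  define P where "P = Mmat a b f' ** matrix_inv (Bmat f t n)"
  have "(\<Sum>j\<in>{2..n}. outer (wopt a b f f' t n j) (f (t j) - f (t (j - 1)))) = P ** Bmat f t n"
    unfolding wopt_def P_def[symmetric]
    by (simp add: Bmat_def matrix_sum_ldistrib matrix_mult_scaleR_right matrix_mult_outer
        matrix_vector_mult_scaleR outer_scaleR_left)
  also have "\<dots> = Mmat a b f'"
    unfolding P_def using matrix_inv_left[OF assms] by (metis matrix_mul_assoc matrix_mul_rid)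
  finally show ?thesis unfolding unbiased_def by simp
qed

lemma weighted_pythagoras:
  fixes D \<alpha> \<beta> :: "nat \<Rightarrow> real"
  assumes "(\<Sum>j\<in>S. D j * \<alpha> j * \<beta> j) = (\<Sum>j\<in>S. D j * \<alpha> j * \<alpha> j)"
  shows "(\<Sum>j\<in>S. D j * (\<beta> j)\<^sup>2) = (\<Sum>j\<in>S. D j * (\<alpha> j)\<^sup>2) + (\<Sum>j\<in>S. D j * (\<beta> j - \<alpha> j)\<^sup>2)"
proof -
  have "(\<Sum>j\<in>S. D j * (\<beta> j)\<^sup>2) = (\<Sum>j\<in>S. D j * (\<alpha> j)\<^sup>2 + D j * (\<beta> j - \<alpha> j)\<^sup>2
      + 2 * (D j * \<alpha> j * \<beta> j) - 2 * (D j * \<alpha> j * \<alpha> j))"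
    by (rule sum.cong) (auto simp: power2_eq_square algebra_simps)
  then show ?thesis
    by (simp add: sum.distrib sum_subtractf sum_distrib_left[symmetric] assms)
qed

lemma wopt_minimises_weighted_square_sum:
  fixes f f' :: "real \<Rightarrow> real^'n"
  assumes "design a b t n" "invertible (Bmat f t n)" "unbiased a b f f' t n w"
  shows "weighted_square_sum t n (wopt a b f f' t n) u \<le> weighted_square_sum t n w u"
proof -
  define D where "D j = t j - t (j - 1)" for j
  define d where "d j = f (t j) - f (t (j - 1))" for j
  define \<alpha> where "\<alpha> j = wopt a b f f' t n j \<bullet> u" for j
  define \<beta> where "\<beta> j = w j \<bullet> u" for j
  define v where "v = transpose (Mmat a b f' ** matrix_inv (Bmat f t n)) *v u"
  have D_pos: "0 < D j" if "j \<in> {2..n}" for j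
    using assms(1) that unfolding design_def D_def by auto
  have D_\<alpha>: "D j * \<alpha> j = d j \<bullet> v" if "j \<in> {2..n}" for j
    using D_pos[OF that]
    unfolding \<alpha>_def wopt_def v_def d_def[symmetric] D_def[symmetric]
    by (simp add: matrix_vector_mult_scaleR inner_matrix_vector_mult_transpose inner_commute)
  have "(\<Sum>j\<in>{2..n}. D j * \<alpha> j * \<beta> j) = u \<bullet> (Mmat a b f' *v v)"
    using unbiased_cross_sum[OF assms(3), where v=v and u=u] D_\<alpha> unfolding \<beta>_def d_def D_def by simp
  also have "\<dots> = (\<Sum>j\<in>{2..n}. D j * \<alpha> j * \<alpha> j)"
    using unbiased_cross_sum[OF wopt_unbiased[OF assms(2)], where v=v and u=u] D_\<alpha>
    unfolding \<alpha>_def d_def D_def by simp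
  finally have "(\<Sum>j\<in>{2..n}. D j * (\<beta> j)\<^sup>2)
      = (\<Sum>j\<in>{2..n}. D j * (\<alpha> j)\<^sup>2) + (\<Sum>j\<in>{2..n}. D j * (\<beta> j - \<alpha> j)\<^sup>2)"
    by (rule weighted_pythagoras)
  moreover have "0 \<le> (\<Sum>j\<in>{2..n}. D j * (\<beta> j - \<alpha> j)\<^sup>2)"
    using D_pos by (auto intro!: sum_nonneg simp: less_imp_le)
  ultimately show ?thesis unfolding weighted_square_sum_def D_def \<alpha>_def \<beta>_def by linarith
qed

lemma gpart_nonneg:
  assumes "invertible (Cmat a b f f')" "0 < a" "design a b t n"
  shows "0 \<le> gpart a b f f' t n w s"
proof -
  have "0 \<le> weighted_square_sum t n w u" for u
    using assms(3) unfolding weighted_square_sum_def design_def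
    by (auto intro!: sum_nonneg simp: less_imp_le)
  then show ?thesis
    using assms(2) unfolding gpart_eq_weighted_square_sum[OF assms(1)] by simp
qed

lemma gpart_wopt_le:
  assumes "invertible (Cmat a b f f')" "design a b t n" "invertible (Bmat f t n)"
    and "unbiased a b f f' t n w"
  shows "gpart a b f f' t n (wopt a b f f' t n) s \<le> gpart a b f f' t n w s"
  unfolding gpart_eq_weighted_square_sum[OF assms(1)]
  using wopt_minimises_weighted_square_sum[OF assms(2-4)] by simp

lemma continuous_on_gpart:
  assumes "continuous_on S f"
  shows "continuous_on S (gpart a b f f' t n w)"
  unfolding gpart_def
  by (intro continuous_on_inner assms linear_continuous_on_compose[OF assms] matrix_vector_mul_linear)

lemma mu_p_mono:
  assumes "0 < p" "continuous_on {a..b} g" "continuous_on {a..b} h"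
    and "\<And>s. s \<in> {a..b} \<Longrightarrow> 0 \<le> g s" "\<And>s. s \<in> {a..b} \<Longrightarrow> g s \<le> h s"
  shows "mu_p a b p g \<le> mu_p a b p h"
proof -
  have h_nonneg: "0 \<le> h s" if "s \<in> {a..b}" for s
    using assms(4,5)[OF that] by linarith
  have int_g: "(\<lambda>s. g s powr p) integrable_on {a..b}"
    using assms(1,2,4) by (intro integrable_continuous_interval continuous_on_powr' continuous_on_const) auto
  have int_h: "(\<lambda>s. h s powr p) integrable_on {a..b}"
    using assms(1,3) h_nonneg
    by (intro integrable_continuous_interval continuous_on_powr' continuous_on_const) auto
  have "integral {a..b} (\<lambda>s. g s powr p) \<le> integral {a..b} (\<lambda>s. h s powr p)"
    using assms(1,4,5) by (intro integral_le int_g int_h powr_mono2) auto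
  moreover have "0 \<le> integral {a..b} (\<lambda>s. g s powr p)"
    by (intro integral_nonneg int_g) auto
  ultimately show ?thesis
    unfolding mu_p_def using assms(1) by (intro powr_mono2) auto
qed

lemma mu_inf_mono:
  assumes "a \<le> b" "continuous_on {a..b} h" "\<And>s. s \<in> {a..b} \<Longrightarrow> g s \<le> h s"
  shows "mu_inf a b g \<le> mu_inf a b h"
proof -
  have "bdd_above (h ` {a..b})"
    by (intro bounded_imp_bdd_above compact_imp_bounded compact_continuous_image assms(2) compact_Icc)
  moreover have "\<exists>s'\<in>{a..b}. g s \<le> h s'" if "s \<in> {a..b}" for s
    using assms(3) that by blast
  ultimately show ?thesis
    unfolding mu_inf_def using assms(1) by (intro cSUP_mono) auto
qed

theorem theorem4p1:
  fixes a b :: real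
    and f1 f1' :: "real \<Rightarrow> real^'m1" and f2 f2' :: "real \<Rightarrow> real^'m2"
    and t1 t2 :: "nat \<Rightarrow> real" and n1 n2 :: nat
  assumes "0 < a" "a < b"
    and "C1_with a b f1 f1'" "C1_with a b f2 f2'"
    and "lin_indep_on {a..b} f1" "lin_indep_on {a..b} f2"
    and "design a b t1 n1" "design a b t2 n2"
    and "invertible (Cmat a b f1 f1')" "invertible (Cmat a b f2 f2')"
    and "invertible (Bmat f1 t1 n1)" "invertible (Bmat f2 t2 n2)"
  defines "g \<equiv> \<lambda>w1 w2 s. gpart a b f1 f1' t1 n1 w1 s + gpart a b f2 f2' t2 n2 w2 s"
    and "w1s \<equiv> wopt a b f1 f1' t1 n1" and "w2s \<equiv> wopt a b f2 f2' t2 n2"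
  shows "unbiased a b f1 f1' t1 n1 w1s \<and> unbiased a b f2 f2' t2 n2 w2s
    \<and> (\<forall>w1 w2. unbiased a b f1 f1' t1 n1 w1 \<and> unbiased a b f2 f2' t2 n2 w2 \<longrightarrow>
          (\<forall>p::real. 1 \<le> p \<longrightarrow> mu_p a b p (g w1s w2s) \<le> mu_p a b p (g w1 w2))
          \<and> mu_inf a b (g w1s w2s) \<le> mu_inf a b (g w1 w2))"
proof -
  have "continuous_on {a..b} f1" "continuous_on {a..b} f2"
    using assms(3,4) unfolding C1_with_def by (auto intro: continuous_on_vector_derivative)
  then have g_cont: "continuous_on {a..b} (g w1 w2)" for w1 w2
    unfolding g_def by (intro continuous_intros continuous_on_gpart)
  have g_nonneg: "0 \<le> g w1 w2 s" for w1 w2 s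
    unfolding g_def by (intro add_nonneg_nonneg gpart_nonneg assms(1,7-10))
  have g_le: "g w1s w2s s \<le> g w1 w2 s"
    if "unbiased a b f1 f1' t1 n1 w1" "unbiased a b f2 f2' t2 n2 w2" for w1 w2 s
    unfolding g_def w1s_def w2s_def
    using gpart_wopt_le[OF assms(9,7,11) that(1)] gpart_wopt_le[OF assms(10,8,12) that(2)]
    by (rule add_mono)
  have "(\<forall>p::real. 1 \<le> p \<longrightarrow> mu_p a b p (g w1s w2s) \<le> mu_p a b p (g w1 w2))
      \<and> mu_inf a b (g w1s w2s) \<le> mu_inf a b (g w1 w2)"
    if "unbiased a b f1 f1' t1 n1 w1" "unbiased a b f2 f2' t2 n2 w2" for w1 w2
    using mu_p_mono[OF _ g_cont g_cont g_nonneg g_le[OF that]]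
      mu_inf_mono[OF _ g_cont g_le[OF that]] assms(2) by simp
  then show ?thesis
    using wopt_unbiased[OF assms(11)] wopt_unbiased[OF assms(12)]
    unfolding w1s_def w2s_def by blast
qed

end
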